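(* Let $M\subsetneq F$ be a graded submodule, $\prec$ a monomial order on $F$, and $G$ a homogeneous Gröbner basis of $M$ with respect to $\prec$. Then $N_M$ admits an $l$-standard cone decomposition $Q$ such that \[ G'=\{g\in G:\deg(g)\le\max\{1+\deg(Q),\,l\}\} \] is also a Gröbner basis of $M$ with respect to $\prec$. In particular, the reduced Gröbner basis of $M$ with respect to $\prec$ has degree at most $\max\{1+\deg(Q),l\}$.
   Context: Standing notation. $S=\mathbb{K}[x_1,\dots,x_n]$ is standard graded, and $F=Se_1\oplus\cdots\oplus Se_m$ is a graded free module with $\deg(e_j)\ge0$ integers; $l=\max_j\deg(e_j)$. Monomials of $F$ are $x^\alpha e_j$ of degree $|\alpha|+\deg(e_j)$. For a monomial order $\prec$ and a submodule $M$, $N_M$ is the $\mathbb{K}$-span of the monomials of $F$ not in $\mathrm{in}_\prec(M)$. Cones. For a homogeneous $h\in F$ and $u\subseteq\{x_1,\dots,x_n\}$, the cone $C(h,u)=h\,\mathbb{K}[u]$ has degree $\deg(h)$ and dimension $|u|$. A cone decomposition of a $\mathbb{K}$-subspace $T\subseteq F$ is a finite set $P$ of cones with $T=\bigoplus_{C\in P}C$ as $\mathbb{K}$-vector spaces; $\deg(P)=\max_{C\in P}\deg(C)$, and $P^+=\{C\in P:\dim C>0\}$. $P$ is $q$-standard if (1) no $C\in P^+$ has $\deg(C)<q$, and (2) for every $C\in P^+$ and every integer $d$ with $q\le d\le\deg(C)$ there is $C'\in P$ with $\deg(C')=d$ and $\dim(C')\ge\dim(C)$. *)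

theory Defs
  imports "HOL-Library.Poly_Mapping"
begin

text \<open>
  The variables x_1,...,x_n are the elements of a finite type 'v.
  A monomial of S = K[x_1..x_n] is an exponent vector ('v to nat, finitely supported).
  The basis vectors e_1,...,e_m of F are the elements of a finite type 'j,
  with degrees given by d :: 'j \<Rightarrow> nat.  A monomial x^a e_j of F is the pair (a, j).
  Polynomials of S are finitely supported maps (monomial to K), and
  elements of F are finitely supported maps (monomial of F to K).
\<close>

type_synonym 'v mon = "'v \<Rightarrow>\<^sub>0 nat"
type_synonym ('v, 'j) fterm = "('v \<Rightarrow>\<^sub>0 nat) \<times> 'j"

definition mon_deg :: "'v mon \<Rightarrow> nat" where
  "mon_deg a = (\<Sum>v\<in>Poly_Mapping.keys a. Poly_Mapping.lookup a v)"

definition term_deg :: "('j \<Rightarrow> nat) \<Rightarrow> ('v, 'j) fterm \<Rightarrow> nat" where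
  "term_deg d u = mon_deg (fst u) + d (snd u)"

definition tshift :: "'v mon \<Rightarrow> ('v, 'j) fterm \<Rightarrow> ('v, 'j) fterm" where
  "tshift t u = (t + fst u, snd u)"

definition tdvd :: "('v, 'j) fterm \<Rightarrow> ('v, 'j) fterm \<Rightarrow> bool" where
  "tdvd u w \<longleftrightarrow> (\<exists>t. w = tshift t u)"

definition mod_mult :: "('v mon \<Rightarrow>\<^sub>0 'k::comm_ring_1) \<Rightarrow> (('v, 'j) fterm \<Rightarrow>\<^sub>0 'k)
    \<Rightarrow> (('v, 'j) fterm \<Rightarrow>\<^sub>0 'k)" where
  "mod_mult p f = (\<Sum>t\<in>Poly_Mapping.keys p. \<Sum>u\<in>Poly_Mapping.keys f.
      Poly_Mapping.single (tshift t u) (Poly_Mapping.lookup p t * Poly_Mapping.lookup f u))"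

definition is_submodule :: "(('v, 'j) fterm \<Rightarrow>\<^sub>0 'k::comm_ring_1) set \<Rightarrow> bool" where
  "is_submodule M \<longleftrightarrow> 0 \<in> M \<and> (\<forall>f\<in>M. \<forall>g\<in>M. f + g \<in> M) \<and>
     (\<forall>p. \<forall>f\<in>M. mod_mult p f \<in> M)"

text \<open>Homogeneous of degree k (0 is homogeneous of every degree).\<close>
definition homog_of :: "('j \<Rightarrow> nat) \<Rightarrow> nat \<Rightarrow> (('v, 'j) fterm \<Rightarrow>\<^sub>0 'k::zero) \<Rightarrow> bool" where
  "homog_of d k f \<longleftrightarrow> (\<forall>u\<in>Poly_Mapping.keys f. term_deg d u = k)"

definition homogeneous :: "('j \<Rightarrow> nat) \<Rightarrow> (('v, 'j) fterm \<Rightarrow>\<^sub>0 'k::zero) \<Rightarrow> bool" where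
  "homogeneous d f \<longleftrightarrow> (\<exists>k. homog_of d k f)"

text \<open>Degree of an element: the maximal degree of its monomials (0 for f = 0);
  for a nonzero homogeneous element this is its degree.\<close>
definition elem_deg :: "('j \<Rightarrow> nat) \<Rightarrow> (('v, 'j) fterm \<Rightarrow>\<^sub>0 'k::zero) \<Rightarrow> nat" where
  "elem_deg d f = Max (insert 0 (term_deg d ` Poly_Mapping.keys f))"

definition hcomp :: "('j \<Rightarrow> nat) \<Rightarrow> nat \<Rightarrow> (('v, 'j) fterm \<Rightarrow>\<^sub>0 'k::comm_monoid_add)
    \<Rightarrow> (('v, 'j) fterm \<Rightarrow>\<^sub>0 'k)" where
  "hcomp d k f = (\<Sum>u\<in>{u\<in>Poly_Mapping.keys f. term_deg d u = k}. Poly_Mapping.single u (Poly_Mapping.lookup f u))"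

definition graded_submodule :: "('j \<Rightarrow> nat) \<Rightarrow> (('v, 'j) fterm \<Rightarrow>\<^sub>0 'k::comm_ring_1) set \<Rightarrow> bool" where
  "graded_submodule d M \<longleftrightarrow> is_submodule M \<and> (\<forall>f\<in>M. \<forall>k. hcomp d k f \<in> M)"

text \<open>Monomial order on F, given as a strict order \<open>ord u w\<close> meaning u \<prec> w:
  a well-founded strict total order, compatible with multiplication by monomials,
  and with u \<prec> x^t u for t \<noteq> 0.\<close>
definition monomial_order :: "(('v, 'j) fterm \<Rightarrow> ('v, 'j) fterm \<Rightarrow> bool) \<Rightarrow> bool" where
  "monomial_order ord \<longleftrightarrow>
     (\<forall>u. \<not> ord u u) \<and> (\<forall>u v w. ord u v \<longrightarrow> ord v w \<longrightarrow> ord u w) \<and>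
     (\<forall>u v. u \<noteq> v \<longrightarrow> ord u v \<or> ord v u) \<and> wfP ord \<and>
     (\<forall>u v t. ord u v \<longrightarrow> ord (tshift t u) (tshift t v)) \<and>
     (\<forall>u t. t \<noteq> 0 \<longrightarrow> ord u (tshift t u))"

definition lt :: "(('v, 'j) fterm \<Rightarrow> ('v, 'j) fterm \<Rightarrow> bool) \<Rightarrow> (('v, 'j) fterm \<Rightarrow>\<^sub>0 'k::zero)
    \<Rightarrow> ('v, 'j) fterm" where
  "lt ord f = (THE u. u \<in> Poly_Mapping.keys f \<and> (\<forall>w\<in>Poly_Mapping.keys f. w \<noteq> u \<longrightarrow> ord w u))"

definition lc :: "(('v, 'j) fterm \<Rightarrow> ('v, 'j) fterm \<Rightarrow> bool) \<Rightarrow> (('v, 'j) fterm \<Rightarrow>\<^sub>0 'k::zero) \<Rightarrow> 'k" where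
  "lc ord f = Poly_Mapping.lookup f (lt ord f)"

text \<open>The monomials of the initial module in(M), i.e. of the submodule generated by the
  leading monomials of the nonzero elements of M.\<close>
definition init_terms :: "(('v, 'j) fterm \<Rightarrow> ('v, 'j) fterm \<Rightarrow> bool) \<Rightarrow> (('v, 'j) fterm \<Rightarrow>\<^sub>0 'k::zero) set
    \<Rightarrow> ('v, 'j) fterm set" where
  "init_terms ord M = {w. \<exists>g\<in>M. g \<noteq> 0 \<and> tdvd (lt ord g) w}"

definition normal_space :: "(('v, 'j) fterm \<Rightarrow> ('v, 'j) fterm \<Rightarrow> bool) \<Rightarrow> (('v, 'j) fterm \<Rightarrow>\<^sub>0 'k::zero) set
    \<Rightarrow> (('v, 'j) fterm \<Rightarrow>\<^sub>0 'k) set" where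
  "normal_space ord M = {f. Poly_Mapping.keys f \<inter> init_terms ord M = {}}"

definition groebner_basis :: "(('v, 'j) fterm \<Rightarrow> ('v, 'j) fterm \<Rightarrow> bool) \<Rightarrow> (('v, 'j) fterm \<Rightarrow>\<^sub>0 'k::zero) set
    \<Rightarrow> (('v, 'j) fterm \<Rightarrow>\<^sub>0 'k) set \<Rightarrow> bool" where
  "groebner_basis ord M G \<longleftrightarrow> finite G \<and> G \<subseteq> M \<and>
     (\<forall>f\<in>M. f \<noteq> 0 \<longrightarrow> (\<exists>g\<in>G. g \<noteq> 0 \<and> tdvd (lt ord g) (lt ord f)))"

definition reduced_groebner_basis :: "(('v, 'j) fterm \<Rightarrow> ('v, 'j) fterm \<Rightarrow> bool)
    \<Rightarrow> (('v, 'j) fterm \<Rightarrow>\<^sub>0 'k::{zero,one}) set \<Rightarrow> (('v, 'j) fterm \<Rightarrow>\<^sub>0 'k) set \<Rightarrow> bool" where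
  "reduced_groebner_basis ord M G \<longleftrightarrow> groebner_basis ord M G \<and>
     (\<forall>g\<in>G. g \<noteq> 0 \<and> lc ord g = 1) \<and>
     (\<forall>g\<in>G. \<forall>g'\<in>G. g' \<noteq> g \<longrightarrow> (\<forall>u\<in>Poly_Mapping.keys g. \<not> tdvd (lt ord g') u))"

text \<open>Cones.  A cone C(h,U) is represented by the pair (h, U), U a set of variables.\<close>
definition cone :: "(('v, 'j) fterm \<Rightarrow>\<^sub>0 'k::comm_ring_1) \<times> 'v set \<Rightarrow> (('v, 'j) fterm \<Rightarrow>\<^sub>0 'k) set" where
  "cone C = {mod_mult p (fst C) | p. \<forall>t\<in>Poly_Mapping.keys p. Poly_Mapping.keys t \<subseteq> snd C}"

definition cone_deg :: "('j \<Rightarrow> nat) \<Rightarrow> (('v, 'j) fterm \<Rightarrow>\<^sub>0 'k::zero) \<times> 'v set \<Rightarrow> nat" where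
  "cone_deg d C = elem_deg d (fst C)"

definition cone_dim :: "(('v, 'j) fterm \<Rightarrow>\<^sub>0 'k::zero) \<times> 'v set \<Rightarrow> nat" where
  "cone_dim C = card (snd C)"

definition cone_decomp :: "('j \<Rightarrow> nat) \<Rightarrow> (('v, 'j) fterm \<Rightarrow>\<^sub>0 'k::comm_ring_1) set
    \<Rightarrow> ((('v, 'j) fterm \<Rightarrow>\<^sub>0 'k) \<times> 'v set) set \<Rightarrow> bool" where
  "cone_decomp d T P \<longleftrightarrow> finite P \<and>
     (\<forall>C\<in>P. homogeneous d (fst C) \<and> fst C \<noteq> 0) \<and>
     (\<forall>f. f \<in> T \<longleftrightarrow> (\<exists>a. (\<forall>C\<in>P. a C \<in> cone C) \<and> f = (\<Sum>C\<in>P. a C))) \<and>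
     (\<forall>a b. (\<forall>C\<in>P. a C \<in> cone C \<and> b C \<in> cone C) \<and> (\<Sum>C\<in>P. a C) = (\<Sum>C\<in>P. b C)
        \<longrightarrow> (\<forall>C\<in>P. a C = b C))"

definition decomp_deg :: "('j \<Rightarrow> nat) \<Rightarrow> ((('v, 'j) fterm \<Rightarrow>\<^sub>0 'k::zero) \<times> 'v set) set \<Rightarrow> nat" where
  "decomp_deg d P = Max (cone_deg d ` P)"

definition q_standard :: "('j \<Rightarrow> nat) \<Rightarrow> nat \<Rightarrow> ((('v, 'j) fterm \<Rightarrow>\<^sub>0 'k::zero) \<times> 'v set) set \<Rightarrow> bool" where
  "q_standard d q P \<longleftrightarrow>
     (\<forall>C\<in>P. cone_dim C > 0 \<longrightarrow> q \<le> cone_deg d C) \<and>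
     (\<forall>C\<in>P. cone_dim C > 0 \<longrightarrow> (\<forall>k. q \<le> k \<and> k \<le> cone_deg d C \<longrightarrow>
        (\<exists>C'\<in>P. cone_deg d C' = k \<and> cone_dim C' \<ge> cone_dim C)))"

end

theory Submission
  imports Defs "HOL-Library.Disjoint_Sets"
begin

text \<open>
  The leading monomials of G generate the initial module in(M), a finitely generated monomial
  submodule I, and N_M is spanned by the monomials outside I.  These are partitioned into
  monomial cones h K[U] by splitting: a cone is dropped if h lies in I, kept if it avoids I,
  and otherwise replaced by h K[U - {x}] and x h K[U].  The variable x is chosen outside a
  largest W \<subseteq> U with h K[W] disjoint from I; then h K[U - {x}] contains a cone of degree deg h
  and dimension at least |W|, which bounds the dimension of every cone coming from x h K[U],
  and this keeps the family l-standard.  A minimal generator w of I lying in h K[U] with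
  w \<noteq> h lies in one of the two halves, and if w = x h then h lies in a cone of degree at
  least deg h; so deg w \<le> 1 + deg Q.  As G is homogeneous, the elements of G whose leading
  monomials are minimal generators of I form a Groebner basis, and every element of the
  reduced Groebner basis is homogeneous with a minimal generator as leading monomial.
\<close>

section \<open>Monomials of F\<close>

lemma mon_deg_eq_sum: "mon_deg (a::'v::finite \<Rightarrow>\<^sub>0 nat) = (\<Sum>v\<in>UNIV. Poly_Mapping.lookup a v)"
  unfolding mon_deg_def by (rule sum.mono_neutral_left) (auto simp: in_keys_iff)

lemma mon_deg_add: "mon_deg ((s::'v::finite \<Rightarrow>\<^sub>0 nat) + t) = mon_deg s + mon_deg t"
  by (simp add: mon_deg_eq_sum lookup_add sum.distrib)

lemma mon_deg_eq_0_iff: "mon_deg (t::'v::finite \<Rightarrow>\<^sub>0 nat) = 0 \<longleftrightarrow> t = 0"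
  by (auto simp: mon_deg_eq_sum intro: poly_mapping_eqI)

lemma mon_deg_single: "mon_deg (Poly_Mapping.single x n) = n"
  by (simp add: mon_deg_def)

lemma term_deg_tshift: "term_deg d (tshift (t::'v::finite \<Rightarrow>\<^sub>0 nat) u) = mon_deg t + term_deg d u"
  by (simp add: term_deg_def tshift_def mon_deg_add)

lemma term_deg_zero: "term_deg d (0, j) = d j"
  by (simp add: term_deg_def mon_deg_def)

lemma tshift_0 [simp]: "tshift 0 u = u"
  by (simp add: tshift_def)

lemma tshift_tshift: "tshift s (tshift t u) = tshift (s + t) u"
  by (simp add: tshift_def add.assoc)

lemma fst_tshift: "fst (tshift t u) = t + fst u"
  by (simp add: tshift_def)

lemma snd_tshift [simp]: "snd (tshift t u) = snd u"
  by (simp add: tshift_def)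

lemma tdvd_iff_lookup_le:
  "tdvd u w \<longleftrightarrow> snd u = snd w \<and> (\<forall>v. Poly_Mapping.lookup (fst u) v \<le> Poly_Mapping.lookup (fst w) v)"
proof
  assume "tdvd u w"
  then show "snd u = snd w \<and> (\<forall>v. Poly_Mapping.lookup (fst u) v \<le> Poly_Mapping.lookup (fst w) v)"
    by (auto simp: tdvd_def tshift_def lookup_add)
next
  assume "snd u = snd w \<and> (\<forall>v. Poly_Mapping.lookup (fst u) v \<le> Poly_Mapping.lookup (fst w) v)"
  then have "w = tshift (fst w - fst u) u"
    by (auto simp: tshift_def lookup_add lookup_minus intro!: prod_eqI poly_mapping_eqI)
  then show "tdvd u w"
    unfolding tdvd_def by blast
qed

lemma tdvd_refl [simp]: "tdvd u u"
  by (simp add: tdvd_iff_lookup_le)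

lemma tdvd_trans: "tdvd u v \<Longrightarrow> tdvd v w \<Longrightarrow> tdvd u w"
  by (auto simp: tdvd_iff_lookup_le intro: order_trans)

lemma tdvd_antisym: "tdvd u v \<Longrightarrow> tdvd v u \<Longrightarrow> u = v"
  by (auto simp: tdvd_iff_lookup_le intro!: prod_eqI poly_mapping_eqI intro: antisym)

lemma tdvd_tshift [simp]: "tdvd u (tshift t u)"
  by (auto simp: tdvd_def)

lemma tdvd_term_deg_le: "tdvd u w \<Longrightarrow> term_deg d u \<le> term_deg d (w::('v::finite, 'j) fterm)"
  by (auto simp: tdvd_def term_deg_tshift)

lemma tdvd_term_deg_eq: "tdvd u w \<Longrightarrow> term_deg d u = term_deg d (w::('v::finite, 'j) fterm) \<Longrightarrow> u = w"
  by (auto simp: tdvd_def term_deg_tshift mon_deg_eq_0_iff)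

lemma tshift_eq_iff: "tshift t h = w \<longleftrightarrow> tdvd h w \<and> t = fst w - fst h"
  by (auto simp: tdvd_def fst_tshift)

lemma inj_tshift_monomial: "inj (\<lambda>t. tshift t h)"
  by (auto intro!: injI simp: tshift_def)

section \<open>Leading monomials and submodules\<close>

lemma monomial_orderD:
  assumes "monomial_order ord"
  shows "\<not> ord u u" and "ord u v \<Longrightarrow> ord v w \<Longrightarrow> ord u w" and "u \<noteq> v \<Longrightarrow> ord u v \<or> ord v u"
    and "t \<noteq> 0 \<Longrightarrow> ord u (tshift t u)"
  using assms unfolding monomial_order_def by blast+

lemma finite_ex_greatest:
  assumes trans: "\<And>u v w. ord u v \<Longrightarrow> ord v w \<Longrightarrow> ord u w"
    and total: "\<And>u v. u \<noteq> v \<Longrightarrow> ord u v \<or> ord v u"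
    and "finite K" "K \<noteq> {}"
  shows "\<exists>u\<in>K. \<forall>w\<in>K. w \<noteq> u \<longrightarrow> ord w u"
  using assms(3,4)
proof (induction K rule: finite_ne_induct)
  case (insert x K)
  then obtain m where "m \<in> K" "\<forall>w\<in>K. w \<noteq> m \<longrightarrow> ord w m"
    by blast
  then show ?case
    using trans total[of x m] by (cases "ord m x") (metis insert_iff)+
qed simp

lemma lt_greatest:
  assumes "monomial_order ord" and "f \<noteq> 0"
  shows lt_in_keys: "lt ord f \<in> Poly_Mapping.keys f"
    and lt_max: "\<And>w. w \<in> Poly_Mapping.keys f \<Longrightarrow> w \<noteq> lt ord f \<Longrightarrow> ord w (lt ord f)"
proof -
  note mo = monomial_orderD[OF assms(1)]
  obtain u where u: "u \<in> Poly_Mapping.keys f" "\<forall>w\<in>Poly_Mapping.keys f. w \<noteq> u \<longrightarrow> ord w u"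
    using finite_ex_greatest[of ord "Poly_Mapping.keys f"] mo(2,3) assms(2) by auto
  have "lt ord f = u"
    unfolding lt_def by (rule the_equality) (use u mo(1,2) in metis)+
  then show "lt ord f \<in> Poly_Mapping.keys f"
    and "\<And>w. w \<in> Poly_Mapping.keys f \<Longrightarrow> w \<noteq> lt ord f \<Longrightarrow> ord w (lt ord f)"
    using u by auto
qed

lemma mod_mult_minus_one: "mod_mult (Poly_Mapping.single 0 (-1)) g = - g"
  unfolding mod_mult_def
  by (rule poly_mapping_eqI) (simp add: lookup_sum lookup_single when_def in_keys_iff tshift_def)

lemma submodule_diff:
  assumes "is_submodule M" "f \<in> M" "g \<in> M"
  shows "f - g \<in> M"
proof -
  have "- g \<in> M"
    using assms mod_mult_minus_one[of g] unfolding is_submodule_def by metis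
  then have "f + - g \<in> M"
    using assms unfolding is_submodule_def by blast
  then show ?thesis
    by simp
qed

section \<open>Monomial cones\<close>

definition mcone :: "('v, 'j) fterm \<Rightarrow> 'v set \<Rightarrow> ('v, 'j) fterm set" where
  "mcone h U = {tshift t h | t. Poly_Mapping.keys t \<subseteq> U}"

lemma mem_mcone_iff:
  "w \<in> mcone h U \<longleftrightarrow> snd w = snd h \<and>
     (\<forall>v. Poly_Mapping.lookup (fst h) v \<le> Poly_Mapping.lookup (fst w) v \<and>
          (v \<notin> U \<longrightarrow> Poly_Mapping.lookup (fst w) v = Poly_Mapping.lookup (fst h) v))"
proof
  assume "w \<in> mcone h U"
  then show "snd w = snd h \<and> (\<forall>v. Poly_Mapping.lookup (fst h) v \<le> Poly_Mapping.lookup (fst w) v \<and>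
      (v \<notin> U \<longrightarrow> Poly_Mapping.lookup (fst w) v = Poly_Mapping.lookup (fst h) v))"
    by (auto simp: mcone_def fst_tshift lookup_add in_keys_iff)
next
  assume w: "snd w = snd h \<and> (\<forall>v. Poly_Mapping.lookup (fst h) v \<le> Poly_Mapping.lookup (fst w) v \<and>
      (v \<notin> U \<longrightarrow> Poly_Mapping.lookup (fst w) v = Poly_Mapping.lookup (fst h) v))"
  then have "w = tshift (fst w - fst h) h" "Poly_Mapping.keys (fst w - fst h) \<subseteq> U"
    by (auto simp: tshift_def lookup_add lookup_minus in_keys_iff intro!: prod_eqI poly_mapping_eqI)
  then show "w \<in> mcone h U"
    unfolding mcone_def by blast
qed

lemma mcone_self [simp]: "h \<in> mcone h U"
  by (simp add: mem_mcone_iff)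

lemma mcone_empty [simp]: "mcone h {} = {h}"
  by (auto simp: mcone_def)

lemma tdvd_of_mem_mcone: "w \<in> mcone h U \<Longrightarrow> tdvd h w"
  by (simp add: mem_mcone_iff tdvd_iff_lookup_le)

lemma mcone_UNIV: "mcone (0, j) UNIV = {w. snd w = j}"
  by (auto simp: mem_mcone_iff)

abbreviation times_var :: "'v \<Rightarrow> ('v, 'j) fterm \<Rightarrow> ('v, 'j) fterm" where
  "times_var x h \<equiv> tshift (Poly_Mapping.single x 1) h"

lemma term_deg_times_var: "term_deg d (times_var x h) = term_deg d (h::('v::finite, 'j) fterm) + 1"
  by (simp add: term_deg_tshift mon_deg_single)

lemma lookup_times_var:
  "Poly_Mapping.lookup (fst (times_var x h)) v = Poly_Mapping.lookup (fst h) v + (if v = x then 1 else 0)"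
  by (simp add: fst_tshift lookup_add lookup_single)

lemma mcone_split:
  assumes "x \<in> U"
  shows "mcone h U = mcone h (U - {x}) \<union> mcone (times_var x h) U"
    and "mcone h (U - {x}) \<inter> mcone (times_var x h) U = {}"
proof -
  have "w \<in> mcone h U \<longleftrightarrow> w \<in> mcone h (U - {x}) \<or> w \<in> mcone (times_var x h) U" for w
  proof (cases "Poly_Mapping.lookup (fst w) x = Poly_Mapping.lookup (fst h) x")
    case True
    then show ?thesis
      unfolding mem_mcone_iff lookup_times_var using assms by auto
  next
    case False
    then have "Poly_Mapping.lookup (fst h) v + (if v = x then 1 else 0) \<le> Poly_Mapping.lookup (fst w) v
        \<longleftrightarrow> Poly_Mapping.lookup (fst h) v \<le> Poly_Mapping.lookup (fst w) v" for v
      by auto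
    moreover have "(v \<notin> U \<longrightarrow>
          Poly_Mapping.lookup (fst w) v = Poly_Mapping.lookup (fst h) v + (if v = x then 1 else 0))
        \<longleftrightarrow> (v \<notin> U \<longrightarrow> Poly_Mapping.lookup (fst w) v = Poly_Mapping.lookup (fst h) v)" for v
      using assms by auto
    moreover have "\<not> (\<forall>v. v \<notin> U - {x} \<longrightarrow> Poly_Mapping.lookup (fst w) v = Poly_Mapping.lookup (fst h) v)"
      using False by blast
    ultimately show ?thesis
      unfolding mem_mcone_iff lookup_times_var by (simp only: snd_tshift) blast
  qed
  then show "mcone h U = mcone h (U - {x}) \<union> mcone (times_var x h) U"
    by blast
  show "mcone h (U - {x}) \<inter> mcone (times_var x h) U = {}"
  proof (rule equals0I)
    fix w
    assume "w \<in> mcone h (U - {x}) \<inter> mcone (times_var x h) U"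
    then have "Poly_Mapping.lookup (fst w) x = Poly_Mapping.lookup (fst h) x"
      and "Poly_Mapping.lookup (fst (times_var x h)) x \<le> Poly_Mapping.lookup (fst w) x"
      unfolding Int_iff mem_mcone_iff by blast+
    then show False
      using lookup_times_var[of x h x] by simp
  qed
qed

lemma lookup_mod_mult_monomial:
  "Poly_Mapping.lookup (mod_mult p (Poly_Mapping.single h (1::'k::comm_ring_1))) w =
    (if tdvd h w then Poly_Mapping.lookup p (fst w - fst h) else 0)"
proof -
  have "Poly_Mapping.lookup (mod_mult p (Poly_Mapping.single h (1::'k))) w =
      (\<Sum>t\<in>Poly_Mapping.keys p. if tshift t h = w then Poly_Mapping.lookup p t else 0)"
    by (simp add: mod_mult_def lookup_sum lookup_single when_def)
  also have "\<dots> = (if tdvd h w then Poly_Mapping.lookup p (fst w - fst h) else 0)"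
    unfolding tshift_eq_iff by (simp add: sum.delta in_keys_iff)
  finally show ?thesis .
qed

lemma keys_mod_mult_monomial_subset:
  assumes "\<forall>t\<in>Poly_Mapping.keys p. Poly_Mapping.keys t \<subseteq> U"
  shows "Poly_Mapping.keys (mod_mult p (Poly_Mapping.single h (1::'k::comm_ring_1))) \<subseteq> mcone h U"
proof
  fix w assume "w \<in> Poly_Mapping.keys (mod_mult p (Poly_Mapping.single h (1::'k)))"
  then have "tdvd h w" and "fst w - fst h \<in> Poly_Mapping.keys p"
    by (auto simp: lookup_mod_mult_monomial in_keys_iff split: if_splits)
  then have "w = tshift (fst w - fst h) h" and "Poly_Mapping.keys (fst w - fst h) \<subseteq> U"
    using assms tshift_eq_iff[of "fst w - fst h" h w] by auto
  then show "w \<in> mcone h U"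
    unfolding mcone_def by blast
qed

lemma mod_mult_monomial_surj:
  fixes f :: "('v, 'j) fterm \<Rightarrow>\<^sub>0 'k::comm_ring_1"
  assumes f: "Poly_Mapping.keys f \<subseteq> mcone h U"
  obtains p where "\<forall>t\<in>Poly_Mapping.keys p. Poly_Mapping.keys t \<subseteq> U"
    and "f = mod_mult p (Poly_Mapping.single h 1)"
proof -
  have "finite {t. Poly_Mapping.lookup f (tshift t h) \<noteq> 0}"
    using finite_vimageI[OF finite_keys[of f] inj_tshift_monomial[of h]] by (simp add: vimage_def in_keys_iff)
  then obtain p where lookup_p: "\<And>t. Poly_Mapping.lookup p t = Poly_Mapping.lookup f (tshift t h)"
    by (metis lookup_Abs_poly_mapping)
  have "\<forall>t\<in>Poly_Mapping.keys p. Poly_Mapping.keys t \<subseteq> U"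
  proof
    fix t assume "t \<in> Poly_Mapping.keys p"
    then have "tshift t h \<in> mcone h U"
      using f by (auto simp: lookup_p in_keys_iff)
    then obtain s where "tshift t h = tshift s h" "Poly_Mapping.keys s \<subseteq> U"
      unfolding mcone_def by blast
    then show "Poly_Mapping.keys t \<subseteq> U"
      by (simp add: tshift_def)
  qed
  moreover have "Poly_Mapping.lookup f w = Poly_Mapping.lookup (mod_mult p (Poly_Mapping.single h 1)) w" for w
  proof (cases "tdvd h w")
    case True
    then have "tshift (fst w - fst h) h = w"
      by (simp add: tshift_eq_iff)
    with True show ?thesis
      by (simp add: lookup_mod_mult_monomial lookup_p)
  next
    case False
    then have "w \<notin> Poly_Mapping.keys f"
      using f tdvd_of_mem_mcone by blast
    then show ?thesis
      using False by (simp add: lookup_mod_mult_monomial in_keys_iff)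
  qed
  then have "f = mod_mult p (Poly_Mapping.single h 1)"
    by (rule poly_mapping_eqI)
  ultimately show ?thesis
    by (rule that)
qed

lemma cone_monomial:
  fixes h :: "('v, 'j) fterm"
  shows "cone (Poly_Mapping.single h (1::'k::comm_ring_1), U) = {f. Poly_Mapping.keys f \<subseteq> mcone h U}"
proof (intro set_eqI iffI)
  fix f :: "('v, 'j) fterm \<Rightarrow>\<^sub>0 'k"
  assume "f \<in> cone (Poly_Mapping.single h 1, U)"
  then obtain p where "\<forall>t\<in>Poly_Mapping.keys p. Poly_Mapping.keys t \<subseteq> U"
    and "f = mod_mult p (Poly_Mapping.single h 1)"
    by (auto simp: cone_def)
  then show "f \<in> {f. Poly_Mapping.keys f \<subseteq> mcone h U}"
    using keys_mod_mult_monomial_subset[of p U h] by simp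
next
  fix f :: "('v, 'j) fterm \<Rightarrow>\<^sub>0 'k"
  assume "f \<in> {f. Poly_Mapping.keys f \<subseteq> mcone h U}"
  then show "f \<in> cone (Poly_Mapping.single h 1, U)"
    by (auto simp: cone_def elim!: mod_mult_monomial_surj)
qed

section \<open>Cone decompositions from partitions into monomial cones\<close>

lemma sum_single_lookup: "(\<Sum>u\<in>Poly_Mapping.keys f. Poly_Mapping.single u (Poly_Mapping.lookup f u)) = f"
  by (rule poly_mapping_eqI) (simp add: lookup_sum lookup_single when_def in_keys_iff)

lemma lookup_sum_disjoint_keys:
  assumes "finite P" "disjoint_family_on T P" "\<forall>C\<in>P. Poly_Mapping.keys (a C) \<subseteq> T C"
    and "C0 \<in> P" "u \<in> T C0"
  shows "Poly_Mapping.lookup (\<Sum>C\<in>P. a C) u = Poly_Mapping.lookup (a C0) u"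
proof -
  have "Poly_Mapping.lookup (a C) u = 0" if "C \<in> P - {C0}" for C
  proof -
    have "u \<notin> T C"
      using assms(2,4,5) that unfolding disjoint_family_on_def by blast
    then show ?thesis
      using assms(3) that by (metis Diff_iff in_keys_iff subsetD)
  qed
  then have "(\<Sum>C\<in>P - {C0}. Poly_Mapping.lookup (a C) u) = 0"
    by (rule sum.neutral[rule_format])
  then show ?thesis
    unfolding lookup_sum sum.remove[OF assms(1,4), of "\<lambda>C. Poly_Mapping.lookup (a C) u"] by simp
qed

lemma span_disjoint_union:
  fixes T :: "'c \<Rightarrow> 'a set"
  assumes "finite P" "disjoint_family_on T P"
  shows "Poly_Mapping.keys f \<subseteq> (\<Union>C\<in>P. T C) \<longleftrightarrow>
      (\<exists>a. (\<forall>C\<in>P. Poly_Mapping.keys (a C) \<subseteq> T C) \<and> f = (\<Sum>C\<in>P. a C))"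
proof
  assume f: "Poly_Mapping.keys f \<subseteq> (\<Union>C\<in>P. T C)"
  define a where "a C = (\<Sum>u\<in>Poly_Mapping.keys f \<inter> T C. Poly_Mapping.single u (Poly_Mapping.lookup f u))" for C
  have "Poly_Mapping.keys (a C) \<subseteq> T C" for C
    unfolding a_def by (rule order_trans[OF keys_sum]) auto
  moreover have "(\<Sum>C\<in>P. a C) =
      (\<Sum>u\<in>(\<Union>C\<in>P. Poly_Mapping.keys f \<inter> T C). Poly_Mapping.single u (Poly_Mapping.lookup f u))"
    unfolding a_def using assms by (intro sum.UNION_disjoint[symmetric]) (auto simp: disjoint_family_on_def)
  moreover have "(\<Union>C\<in>P. Poly_Mapping.keys f \<inter> T C) = Poly_Mapping.keys f"
    using f by blast
  ultimately show "\<exists>a. (\<forall>C\<in>P. Poly_Mapping.keys (a C) \<subseteq> T C) \<and> f = (\<Sum>C\<in>P. a C)"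
    by (metis sum_single_lookup)
next
  assume "\<exists>a. (\<forall>C\<in>P. Poly_Mapping.keys (a C) \<subseteq> T C) \<and> f = (\<Sum>C\<in>P. a C)"
  then show "Poly_Mapping.keys f \<subseteq> (\<Union>C\<in>P. T C)"
    using keys_sum by fastforce
qed

lemma span_disjoint_union_unique:
  assumes "finite P" "disjoint_family_on T P"
    and "\<forall>C\<in>P. Poly_Mapping.keys (a C) \<subseteq> T C" "\<forall>C\<in>P. Poly_Mapping.keys (b C) \<subseteq> T C"
    and "(\<Sum>C\<in>P. a C) = (\<Sum>C\<in>P. b C)" "C \<in> P"
  shows "a C = b C"
proof (rule poly_mapping_eqI)
  fix u
  show "Poly_Mapping.lookup (a C) u = Poly_Mapping.lookup (b C) u"
  proof (cases "u \<in> T C")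
    case True
    then show ?thesis
      using assms lookup_sum_disjoint_keys[of P T] by metis
  next
    case False
    then show ?thesis
      using assms(3,4,6) by (metis in_keys_iff subsetD)
  qed
qed

definition mcone_partition :: "(('v, 'j) fterm \<times> 'v set) set \<Rightarrow> ('v, 'j) fterm set \<Rightarrow> bool" where
  "mcone_partition Q X \<longleftrightarrow> finite Q \<and> disjoint_family_on (\<lambda>C. mcone (fst C) (snd C)) Q \<and>
     (\<Union>C\<in>Q. mcone (fst C) (snd C)) = X"

definition mcone_standard :: "('j \<Rightarrow> nat) \<Rightarrow> nat \<Rightarrow> (('v, 'j) fterm \<times> 'v set) set \<Rightarrow> bool" where
  "mcone_standard d q Q \<longleftrightarrow> (\<forall>C\<in>Q. 0 < card (snd C) \<longrightarrow> q \<le> term_deg d (fst C) \<and>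
     (\<forall>k. q \<le> k \<and> k \<le> term_deg d (fst C) \<longrightarrow>
        (\<exists>C'\<in>Q. term_deg d (fst C') = k \<and> card (snd C) \<le> card (snd C'))))"

definition monomial_cone :: "('v, 'j) fterm \<times> 'v set \<Rightarrow> (('v, 'j) fterm \<Rightarrow>\<^sub>0 'k::zero_neq_one) \<times> 'v set" where
  "monomial_cone C = (Poly_Mapping.single (fst C) 1, snd C)"

lemma cone_deg_monomial_cone: "cone_deg d (monomial_cone C) = term_deg d (fst C)"
  by (simp add: monomial_cone_def cone_deg_def elem_deg_def)

lemma cone_dim_monomial_cone: "cone_dim (monomial_cone C) = card (snd C)"
  by (simp add: monomial_cone_def cone_dim_def)

lemma decomp_deg_monomial_cones:
  "decomp_deg d (monomial_cone ` Q) = Max ((\<lambda>C. term_deg d (fst C)) ` Q)"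
  by (simp add: decomp_deg_def image_image cone_deg_monomial_cone)

lemma cone_decomp_monomial_cones:
  fixes Q :: "(('v, 'j) fterm \<times> 'v set) set"
  assumes "mcone_partition Q X"
  shows "cone_decomp d {f :: ('v, 'j) fterm \<Rightarrow>\<^sub>0 'k::comm_ring_1. Poly_Mapping.keys f \<subseteq> X}
           (monomial_cone ` Q)"
proof -
  \<comment> \<open>T reads off the monomial cone from a cone whose generator is a monomial.\<close>
  define T :: "(('v, 'j) fterm \<Rightarrow>\<^sub>0 'k) \<times> 'v set \<Rightarrow> ('v, 'j) fterm set"
    where "T C = (\<Union>h\<in>Poly_Mapping.keys (fst C). mcone h (snd C))" for C
  have T: "T (monomial_cone C) = mcone (fst C) (snd C)" for C
    by (simp add: T_def monomial_cone_def)
  have cone_T: "cone (monomial_cone C) = {f. Poly_Mapping.keys f \<subseteq> T (monomial_cone C)}" for C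
    unfolding T unfolding monomial_cone_def by (rule cone_monomial)
  have fin: "finite (monomial_cone ` Q)"
    using assms by (simp add: mcone_partition_def)
  have disj: "disjoint_family_on T (monomial_cone ` Q)"
  proof -
    have "T (monomial_cone C) \<inter> T (monomial_cone C') = {}"
      if "C \<in> Q" "C' \<in> Q" "monomial_cone C \<noteq> monomial_cone C'" for C C'
    proof -
      have "C \<noteq> C'"
        using that(3) by blast
      then show ?thesis
        using disjoint_family_onD[of "\<lambda>C. mcone (fst C) (snd C)" Q C C'] assms that(1,2)
        unfolding mcone_partition_def T by simp
    qed
    then show ?thesis
      unfolding disjoint_family_on_def by blast
  qed
  have un: "(\<Union>C\<in>monomial_cone ` Q. T C) = X"
    using assms by (simp add: mcone_partition_def T)
  show ?thesis
    unfolding cone_decomp_def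
  proof (intro conjI allI impI)
    show "finite (monomial_cone ` Q)"
      by (rule fin)
    show "\<forall>C\<in>monomial_cone ` Q. homogeneous d (fst C) \<and> fst C \<noteq> 0"
      by (auto simp: monomial_cone_def homogeneous_def homog_of_def)
        (metis lookup_single_eq lookup_zero zero_neq_one)
    show "f \<in> {f. Poly_Mapping.keys f \<subseteq> X} \<longleftrightarrow>
        (\<exists>a. (\<forall>C\<in>monomial_cone ` Q. a C \<in> cone C) \<and> f = (\<Sum>C\<in>monomial_cone ` Q. a C))"
      for f :: "('v, 'j) fterm \<Rightarrow>\<^sub>0 'k"
      using span_disjoint_union[OF fin disj, of f] un by (simp add: cone_T)
    show "\<forall>C\<in>monomial_cone ` Q. a C = b C"
      if "(\<forall>C\<in>monomial_cone ` Q. a C \<in> cone C \<and> b C \<in> cone C) \<and>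
        (\<Sum>C\<in>monomial_cone ` Q. a C) = (\<Sum>C\<in>monomial_cone ` Q. b C)"
      for a b :: "(('v, 'j) fterm \<Rightarrow>\<^sub>0 'k) \<times> 'v set \<Rightarrow> ('v, 'j) fterm \<Rightarrow>\<^sub>0 'k"
      using span_disjoint_union_unique[OF fin disj, of a b] that by (simp add: cone_T)
  qed
qed

lemma q_standard_monomial_cones:
  assumes "mcone_standard d q Q"
  shows "q_standard d q (monomial_cone ` Q)"
  using assms unfolding mcone_standard_def q_standard_def
  by (simp add: cone_deg_monomial_cone cone_dim_monomial_cone)

lemma mcone_partition_UN:
  assumes "finite J" "\<And>j. j \<in> J \<Longrightarrow> mcone_partition (Q j) (X j)" "disjoint_family_on X J"
  shows "mcone_partition (\<Union>j\<in>J. Q j) (\<Union>j\<in>J. X j)"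
  unfolding mcone_partition_def
proof (intro conjI)
  show "finite (\<Union>j\<in>J. Q j)"
    using assms(1,2) by (simp add: mcone_partition_def)
  show "(\<Union>C\<in>\<Union>j\<in>J. Q j. mcone (fst C) (snd C)) = (\<Union>j\<in>J. X j)"
    using assms(2) by (auto simp: mcone_partition_def)
  show "disjoint_family_on (\<lambda>C. mcone (fst C) (snd C)) (\<Union>j\<in>J. Q j)"
    unfolding disjoint_family_on_def
  proof (intro ballI impI)
    fix C C' assume "C \<in> (\<Union>j\<in>J. Q j)" "C' \<in> (\<Union>j\<in>J. Q j)" "C \<noteq> C'"
    then obtain j j' where j: "j \<in> J" "C \<in> Q j" and j': "j' \<in> J" "C' \<in> Q j'"
      by blast
    show "mcone (fst C) (snd C) \<inter> mcone (fst C') (snd C') = {}"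
    proof (cases "j = j'")
      case True
      then show ?thesis
        using assms(2)[OF j(1)] j(2) j'(2) \<open>C \<noteq> C'\<close>
        unfolding mcone_partition_def disjoint_family_on_def by blast
    next
      case False
      have "mcone (fst C) (snd C) \<subseteq> X j" "mcone (fst C') (snd C') \<subseteq> X j'"
        using assms(2) j j' unfolding mcone_partition_def by blast+
      then show ?thesis
        using disjoint_family_onD[OF assms(3) j(1) j'(1) False] by blast
    qed
  qed
qed

lemma mcone_partition_Un:
  assumes "mcone_partition Q0 X0" "mcone_partition Q1 X1" "X0 \<inter> X1 = {}"
  shows "mcone_partition (Q0 \<union> Q1) (X0 \<union> X1)"
proof -
  have "mcone_partition (\<Union>b\<in>UNIV. if b then Q1 else Q0) (\<Union>b\<in>UNIV. if b then X1 else X0)"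
    by (rule mcone_partition_UN) (use assms in \<open>auto simp: disjoint_family_on_def\<close>)
  moreover have "(\<Union>b\<in>UNIV. if b then Q1 else Q0) = Q0 \<union> Q1" "(\<Union>b\<in>UNIV. if b then X1 else X0) = X0 \<union> X1"
    by (auto simp: UNIV_bool)
  ultimately show ?thesis
    by simp
qed

lemma mcone_standard_UN:
  assumes "\<And>j. j \<in> J \<Longrightarrow> mcone_standard d q (Q j)"
  shows "mcone_standard d q (\<Union>j\<in>J. Q j)"
  unfolding mcone_standard_def
proof (intro ballI impI)
  fix C assume "C \<in> (\<Union>j\<in>J. Q j)" "0 < card (snd C)"
  then obtain j where "j \<in> J" "C \<in> Q j"
    by blast
  with assms \<open>0 < card (snd C)\<close> show "q \<le> term_deg d (fst C) \<and>
      (\<forall>k. q \<le> k \<and> k \<le> term_deg d (fst C) \<longrightarrow>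
         (\<exists>C'\<in>\<Union>j\<in>J. Q j. term_deg d (fst C') = k \<and> card (snd C) \<le> card (snd C')))"
    unfolding mcone_standard_def by blast
qed

lemma mcone_standard_Un:
  assumes Q0: "mcone_standard d (max q k) Q0" and Q1: "mcone_standard d (max q (k + 1)) Q1"
    and fill: "\<And>C. C \<in> Q1 \<Longrightarrow> 0 < card (snd C) \<Longrightarrow> q \<le> k \<Longrightarrow>
      \<exists>C'\<in>Q0. term_deg d (fst C') = k \<and> card (snd C) \<le> card (snd C')"
  shows "mcone_standard d (max q k) (Q0 \<union> Q1)"
  unfolding mcone_standard_def
proof (intro ballI impI conjI allI)
  fix C assume C: "C \<in> Q0 \<union> Q1" "0 < card (snd C)"
  show "max q k \<le> term_deg d (fst C)"
    using C Q0 Q1 unfolding mcone_standard_def by fastforce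
  fix k' assume k': "max q k \<le> k' \<and> k' \<le> term_deg d (fst C)"
  show "\<exists>C'\<in>Q0 \<union> Q1. term_deg d (fst C') = k' \<and> card (snd C) \<le> card (snd C')"
  proof (cases "C \<in> Q0")
    case True
    then show ?thesis
      using C(2) k' Q0 unfolding mcone_standard_def by blast
  next
    case False
    then have "C \<in> Q1"
      using C(1) by blast
    show ?thesis
    proof (cases "max q (k + 1) \<le> k'")
      case True
      then show ?thesis
        using \<open>C \<in> Q1\<close> C(2) k' Q1 unfolding mcone_standard_def by blast
    next
      case False
      then have "k' = k" "q \<le> k"
        using k' by auto
      then show ?thesis
        using fill[OF \<open>C \<in> Q1\<close> C(2)] by blast
    qed
  qed
qed

section \<open>Splitting cones along variables\<close>

definition minimal_in :: "('v, 'j) fterm set \<Rightarrow> ('v, 'j) fterm \<Rightarrow> bool" where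
  "minimal_in I w \<longleftrightarrow> w \<in> I \<and> (\<forall>v. tdvd v w \<longrightarrow> v \<in> I \<longrightarrow> v = w)"

definition avoids :: "('v, 'j) fterm set \<Rightarrow> ('v, 'j) fterm \<Rightarrow> 'v set \<Rightarrow> bool" where
  "avoids I h W \<longleftrightarrow> mcone h W \<inter> I = {}"

definition avoid_dim :: "('v::finite, 'j) fterm set \<Rightarrow> ('v, 'j) fterm \<Rightarrow> 'v set \<Rightarrow> nat" where
  "avoid_dim I h U = Max (card ` {W. W \<subseteq> U \<and> avoids I h W})"

lemma card_le_avoid_dim: "W \<subseteq> U \<Longrightarrow> avoids I h W \<Longrightarrow> card W \<le> avoid_dim I h U"
  unfolding avoid_dim_def by (rule Max_ge) auto

lemma avoid_dim_attained:
  assumes "h \<notin> I"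
  obtains W where "W \<subseteq> U" "avoids I h W" "card W = avoid_dim I h U"
proof -
  have "{} \<in> {W. W \<subseteq> U \<and> avoids I h W}"
    using assms by (simp add: avoids_def)
  then have "avoid_dim I h U \<in> card ` {W. W \<subseteq> U \<and> avoids I h W}"
    unfolding avoid_dim_def by (intro Max_in) auto
  then obtain W where "W \<subseteq> U" "avoids I h W" "avoid_dim I h U = card W"
    by blast
  then show ?thesis
    by (intro that) simp_all
qed

lemma avoid_dim_le_card:
  assumes "h \<notin> I"
  shows "avoid_dim I h U \<le> card U"
proof -
  obtain W where "W \<subseteq> U" "avoids I h W" "card W = avoid_dim I h U"
    by (rule avoid_dim_attained[OF assms])
  then show ?thesis
    using card_mono[of U W] by simp
qed

locale monomial_submodule =
  fixes L :: "('v::finite, 'j) fterm set" and I :: "('v, 'j) fterm set"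
    and d :: "'j \<Rightarrow> nat" and q :: nat
  assumes finite_gens: "finite L" and I_eq: "I = {w. \<exists>u\<in>L. tdvd u w}"
begin

lemma I_upward: "u \<in> I \<Longrightarrow> tdvd u w \<Longrightarrow> w \<in> I"
  using I_eq tdvd_trans by blast

text \<open>The fourth clause supplies, in degree deg h, the dimension that keeps the family standard
  when the cones coming from x h K[U] are added after splitting h K[U] along x.\<close>

definition splits :: "('v, 'j) fterm \<Rightarrow> 'v set \<Rightarrow> (('v, 'j) fterm \<times> 'v set) set \<Rightarrow> bool" where
  "splits h U Q \<longleftrightarrow> mcone_partition Q (mcone h U - I) \<and> (\<forall>C\<in>Q. snd C \<subseteq> U) \<and>
     mcone_standard d (max q (term_deg d h)) Q \<and>
     (h \<notin> I \<longrightarrow> q \<le> term_deg d h \<longrightarrow>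
        (\<exists>C\<in>Q. term_deg d (fst C) = term_deg d h \<and> avoid_dim I h U \<le> card (snd C))) \<and>
     (\<forall>w\<in>mcone h U. minimal_in I w \<longrightarrow> w \<noteq> h \<longrightarrow> (\<exists>C\<in>Q. term_deg d w \<le> term_deg d (fst C) + 1))"

lemma splits_in_I:
  assumes "h \<in> I"
  shows "splits h U {}"
proof -
  have "mcone h U - I = {}"
    using assms I_upward tdvd_of_mem_mcone by blast
  moreover have "w = h" if "w \<in> mcone h U" "minimal_in I w" for w
    using assms that tdvd_of_mem_mcone unfolding minimal_in_def by blast
  ultimately show ?thesis
    using assms by (simp add: splits_def mcone_partition_def mcone_standard_def disjoint_family_on_def)
qed

lemma splits_avoiding:
  assumes "h \<notin> I" "avoids I h U" "q \<le> term_deg d h \<or> U = {}"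
  shows "splits h U {(h, U)}"
proof -
  have "mcone h U \<inter> I = {}"
    using assms(2) by (simp add: avoids_def)
  then have "\<not> minimal_in I w" if "w \<in> mcone h U" for w
    using that unfolding minimal_in_def by blast
  moreover have "avoid_dim I h U \<le> card U"
    using avoid_dim_le_card[OF assms(1)] .
  ultimately show ?thesis
    using assms(3) \<open>mcone h U \<inter> I = {}\<close>
    by (auto simp: splits_def mcone_partition_def mcone_standard_def disjoint_family_on_def)
qed

lemma splits_cone_subset:
  "splits h U Q \<Longrightarrow> C \<in> Q \<Longrightarrow> mcone (fst C) (snd C) \<subseteq> mcone h U - I"
  unfolding splits_def mcone_partition_def by blast

lemma card_le_avoid_dim_of_cone:
  assumes "snd C \<subseteq> U" "fst C \<in> mcone h U" "mcone (fst C) (snd C) \<inter> I = {}"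
  shows "card (snd C) \<le> avoid_dim I h U"
proof (rule card_le_avoid_dim[OF assms(1)])
  obtain s where s: "fst C = tshift s h"
    using assms(2) by (auto simp: mcone_def)
  show "avoids I h (snd C)"
    unfolding avoids_def
  proof (rule equals0I)
    fix w assume "w \<in> mcone h (snd C) \<inter> I"
    then obtain t where t: "w = tshift t h" "Poly_Mapping.keys t \<subseteq> snd C" and "w \<in> I"
      by (auto simp: mcone_def)
    have "tshift t (fst C) = tshift s w"
      by (simp add: s t tshift_tshift add.commute)
    then have "tshift t (fst C) \<in> I"
      using I_upward[OF \<open>w \<in> I\<close>] by (metis tdvd_tshift)
    moreover have "tshift t (fst C) \<in> mcone (fst C) (snd C)"
      using t(2) by (auto simp: mcone_def)
    ultimately show False
      using assms(3) by blast
  qed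
qed

lemma splits_Un_minimal_deg:
  assumes x: "x \<in> U" and hI: "h \<notin> I"
    and Q0: "splits h (U - {x}) Q0" and Q1: "splits (times_var x h) U Q1"
    and w: "w \<in> mcone h U" "minimal_in I w" "w \<noteq> h"
  shows "\<exists>C\<in>Q0 \<union> Q1. term_deg d w \<le> term_deg d (fst C) + 1"
proof -
  consider "w \<in> mcone h (U - {x})" | "w \<in> mcone (times_var x h) U" "w \<noteq> times_var x h" | "w = times_var x h"
    using w(1) mcone_split(1)[OF x] by blast
  then show ?thesis
  proof cases
    case 3
    have "h \<in> (\<Union>C\<in>Q0. mcone (fst C) (snd C))"
      using Q0 hI unfolding splits_def mcone_partition_def by simp
    then obtain C where "C \<in> Q0" "h \<in> mcone (fst C) (snd C)"
      by auto
    then have "fst C \<in> mcone h (U - {x})"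
      using splits_cone_subset[OF Q0] mcone_self by blast
    then have "term_deg d w \<le> term_deg d (fst C) + 1"
      using 3 tdvd_term_deg_le[OF tdvd_of_mem_mcone, of "fst C" h "U - {x}" d]
        term_deg_times_var[of d x h] by simp
    with \<open>C \<in> Q0\<close> show ?thesis
      by blast
  next
    case 1
    then show ?thesis
      using Q0 w(2,3) unfolding splits_def by blast
  next
    case 2
    then show ?thesis
      using Q1 w(2) unfolding splits_def by blast
  qed
qed

lemma splits_Un:
  assumes x: "x \<in> U" and hI: "h \<notin> I"
    and Q0: "splits h (U - {x}) Q0" and Q1: "splits (times_var x h) U Q1"
    and dim: "q \<le> term_deg d h \<Longrightarrow> avoid_dim I h U \<le> avoid_dim I h (U - {x})"
  shows "splits h U (Q0 \<union> Q1)"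
proof -
  note split = mcone_split[OF x, of h]
  have partition: "mcone_partition (Q0 \<union> Q1) (mcone h U - I)"
  proof -
    have "mcone_partition (Q0 \<union> Q1) ((mcone h (U - {x}) - I) \<union> (mcone (times_var x h) U - I))"
      using Q0 Q1 split(2) unfolding splits_def by (intro mcone_partition_Un) auto
    then show ?thesis
      using split(1) by (metis Un_Diff)
  qed
  have fill: "\<exists>C'\<in>Q0. term_deg d (fst C') = term_deg d h \<and> card (snd C) \<le> card (snd C')"
    if "C \<in> Q1" "q \<le> term_deg d h" for C
  proof -
    have "snd C \<subseteq> U"
      using Q1 that(1) unfolding splits_def by blast
    moreover have "mcone (fst C) (snd C) \<subseteq> mcone h U - I"
      using splits_cone_subset[OF Q1 that(1)] split(1) by blast
    ultimately have "card (snd C) \<le> avoid_dim I h U"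
      using mcone_self[of "fst C" "snd C"] by (intro card_le_avoid_dim_of_cone) blast+
    then show ?thesis
      using Q0 hI that(2) dim unfolding splits_def by (meson order_trans)
  qed
  have standard: "mcone_standard d (max q (term_deg d h)) (Q0 \<union> Q1)"
    using Q0 Q1 fill unfolding splits_def term_deg_times_var by (intro mcone_standard_Un) auto
  have "\<exists>C\<in>Q0 \<union> Q1. term_deg d w \<le> term_deg d (fst C) + 1"
    if "w \<in> mcone h U" "minimal_in I w" "w \<noteq> h" for w
    using splits_Un_minimal_deg[OF x hI Q0 Q1 that] .
  moreover have "\<forall>C\<in>Q0 \<union> Q1. snd C \<subseteq> U"
    using Q0 Q1 unfolding splits_def by blast
  moreover have "\<exists>C\<in>Q0 \<union> Q1. term_deg d (fst C) = term_deg d h \<and> avoid_dim I h U \<le> card (snd C)"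
    if "q \<le> term_deg d h"
    using Q0 hI that dim unfolding splits_def by (meson UnI1 order_trans)
  ultimately show ?thesis
    unfolding splits_def using partition standard by blast
qed

definition relevant_gens :: "('v, 'j) fterm \<Rightarrow> 'v set \<Rightarrow> ('v, 'j) fterm set" where
  "relevant_gens h U = {g\<in>L. snd g = snd h \<and>
     (\<forall>v. v \<notin> U \<longrightarrow> Poly_Mapping.lookup (fst g) v \<le> Poly_Mapping.lookup (fst h) v)}"

text \<open>Multiplying h by x \<in> U does not change the relevant generators and does not increase
  any summand; it strictly decreases the one of a generator g with h_x < g_x, and the second
  term while deg h < q.\<close>

definition split_measure :: "('v, 'j) fterm \<Rightarrow> 'v set \<Rightarrow> nat" where
  "split_measure h U =
     (\<Sum>g\<in>relevant_gens h U. \<Sum>v\<in>U. Poly_Mapping.lookup (fst g) v - Poly_Mapping.lookup (fst h) v) +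
     (q - term_deg d h)"

lemma split_measure_times_var:
  assumes "x \<in> U"
    and "term_deg d h < q \<or> (\<exists>g\<in>relevant_gens h U. Poly_Mapping.lookup (fst h) x < Poly_Mapping.lookup (fst g) x)"
  shows "split_measure (times_var x h) U < split_measure h U"
proof -
  let ?gap = "\<lambda>h g. \<Sum>v\<in>U. Poly_Mapping.lookup (fst g) v - Poly_Mapping.lookup (fst h) v"
  have relevant: "relevant_gens (times_var x h) U = relevant_gens h U"
    using assms(1) unfolding relevant_gens_def lookup_times_var by auto
  have gap_le: "?gap (times_var x h) g \<le> ?gap h g" for g
    unfolding lookup_times_var by (rule sum_mono) simp
  have sum_le: "(\<Sum>g\<in>relevant_gens h U. ?gap (times_var x h) g) \<le> (\<Sum>g\<in>relevant_gens h U. ?gap h g)"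
    by (rule sum_mono) (rule gap_le)
  have deg: "term_deg d (times_var x h) = term_deg d h + 1"
    by (rule term_deg_times_var)
  show ?thesis
  proof (cases "term_deg d h < q")
    case True
    then show ?thesis
      using sum_le deg unfolding split_measure_def relevant by linarith
  next
    case False
    then obtain g where g: "g \<in> relevant_gens h U" "Poly_Mapping.lookup (fst h) x < Poly_Mapping.lookup (fst g) x"
      using assms(2) by blast
    have "?gap (times_var x h) g < ?gap h g"
      unfolding lookup_times_var using assms(1) g(2) by (intro sum_strict_mono_ex1) auto
    moreover have "finite (relevant_gens h U)"
      using finite_gens by (simp add: relevant_gens_def)
    ultimately have "(\<Sum>g\<in>relevant_gens h U. ?gap (times_var x h) g) < (\<Sum>g\<in>relevant_gens h U. ?gap h g)"
      using g(1) gap_le by (intro sum_strict_mono_ex1) auto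
    then show ?thesis
      using False deg unfolding split_measure_def relevant by linarith
  qed
qed

lemma avoids_insert:
  assumes "avoids I h W" "x \<in> U" "W \<subseteq> U"
    and x_bounded: "\<forall>g\<in>relevant_gens h U. Poly_Mapping.lookup (fst g) x \<le> Poly_Mapping.lookup (fst h) x"
  shows "avoids I h (insert x W)"
  unfolding avoids_def
proof (rule equals0I)
  fix w assume "w \<in> mcone h (insert x W) \<inter> I"
  then have w: "w \<in> mcone h (insert x W)" and "w \<in> I"
    by auto
  then obtain g where "g \<in> L" "tdvd g w"
    using I_eq by blast
  \<comment> \<open>w with its x-exponent lowered to that of h\<close>
  define w' where "w' = (fst w - Poly_Mapping.single x (Poly_Mapping.lookup (fst w) x - Poly_Mapping.lookup (fst h) x), snd w)"
  have lookup_w': "Poly_Mapping.lookup (fst w') v =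
      (if v = x then Poly_Mapping.lookup (fst h) x else Poly_Mapping.lookup (fst w) v)" for v
    using w by (auto simp: w'_def lookup_minus lookup_single mem_mcone_iff)
  have "Poly_Mapping.lookup (fst g) v \<le> Poly_Mapping.lookup (fst h) v" if "v \<notin> U" for v
  proof -
    have "v \<notin> insert x W"
      using that assms(2,3) by auto
    then show ?thesis
      using \<open>tdvd g w\<close> w unfolding tdvd_iff_lookup_le mem_mcone_iff by metis
  qed
  then have "g \<in> relevant_gens h U"
    using \<open>g \<in> L\<close> \<open>tdvd g w\<close> w unfolding relevant_gens_def tdvd_iff_lookup_le mem_mcone_iff by auto
  then have "tdvd g w'"
    using \<open>tdvd g w\<close> x_bounded
    unfolding tdvd_iff_lookup_le lookup_w' by (simp add: w'_def)
  then have "w' \<in> I"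
    using \<open>g \<in> L\<close> I_eq by blast
  moreover have "w' \<in> mcone h W"
    using w unfolding mem_mcone_iff lookup_w' by (simp add: w'_def)
  ultimately show False
    using assms(1) unfolding avoids_def by blast
qed

lemma exists_split_variable:
  assumes "h \<notin> I" and "\<not> avoids I h U \<or> (term_deg d h < q \<and> U \<noteq> {})"
  obtains x where "x \<in> U" "split_measure (times_var x h) U < split_measure h U"
    and "q \<le> term_deg d h \<longrightarrow> avoid_dim I h U \<le> avoid_dim I h (U - {x})"
proof (cases "q \<le> term_deg d h")
  case True
  obtain W where W: "W \<subseteq> U" "avoids I h W" "card W = avoid_dim I h U"
    using avoid_dim_attained[OF assms(1)] .
  have "W \<noteq> U"
    using W(2) True assms(2) by auto
  then obtain x where x: "x \<in> U" "x \<notin> W"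
    using W(1) by blast
  have "\<exists>g\<in>relevant_gens h U. Poly_Mapping.lookup (fst h) x < Poly_Mapping.lookup (fst g) x"
  proof (rule ccontr)
    assume "\<not> ?thesis"
    then have "avoids I h (insert x W)"
      using W(1,2) x(1) by (intro avoids_insert) auto
    then have "card (insert x W) \<le> avoid_dim I h U"
      using W(1) x(1) by (intro card_le_avoid_dim) auto
    then show False
      using W(3) x(2) finite_subset[OF W(1)] by simp
  qed
  then have "split_measure (times_var x h) U < split_measure h U"
    using x(1) by (intro split_measure_times_var) auto
  moreover have "avoid_dim I h U \<le> avoid_dim I h (U - {x})"
    using W x by (metis card_le_avoid_dim Diff_empty subset_Diff_insert)
  ultimately show ?thesis
    using x(1) that by simp
next
  case False
  then have "U \<noteq> {}"
    using assms by (auto simp: avoids_def)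
  then obtain x where "x \<in> U"
    by blast
  moreover have "split_measure (times_var x h) U < split_measure h U"
    using False \<open>x \<in> U\<close> by (intro split_measure_times_var) auto
  ultimately show ?thesis
    using False that by simp
qed

lemma splits_exists: "\<exists>Q. splits h U Q"
proof (induction "card U" arbitrary: U h rule: less_induct)
  case less
  note smaller_U = less
  show ?case
  proof (induction "split_measure h U" arbitrary: h rule: less_induct)
    case less
    consider "h \<in> I" | "h \<notin> I" "avoids I h U" "q \<le> term_deg d h \<or> U = {}"
      | "h \<notin> I" "\<not> avoids I h U \<or> (term_deg d h < q \<and> U \<noteq> {})"
      by fastforce
    then show ?case
    proof cases
      case 1
      then show ?thesis
        using splits_in_I by blast
    next
      case 2
      then show ?thesis
        using splits_avoiding by blast
    next
      case 3
      obtain x where x: "x \<in> U" "split_measure (times_var x h) U < split_measure h U"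
        and dim: "q \<le> term_deg d h \<longrightarrow> avoid_dim I h U \<le> avoid_dim I h (U - {x})"
        by (rule exists_split_variable[OF 3])
      obtain Q0 where "splits h (U - {x}) Q0"
        using smaller_U x(1) by (meson card_Diff1_less finite)
      moreover obtain Q1 where "splits (times_var x h) U Q1"
        using less x(2) by blast
      ultimately show ?thesis
        using splits_Un[OF x(1) \<open>h \<notin> I\<close> _ _ dim[rule_format]] by blast
    qed
  qed
qed

end

lemma standard_partition_exists:
  fixes L I :: "('v::finite, 'j::finite) fterm set"
  assumes "finite L" "I = {w. \<exists>u\<in>L. tdvd u w}" and deg_gens: "\<And>j. d j \<le> q"
  obtains Q where "mcone_partition Q (- I)" "mcone_standard d q Q"
    and "\<forall>w. minimal_in I w \<longrightarrow> term_deg d w \<le> max (1 + Max ((\<lambda>C. term_deg d (fst C)) ` Q)) q"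
proof -
  interpret monomial_submodule L I d q
    using assms(1,2) by unfold_locales
  have "\<forall>j. \<exists>Q. splits (0, j) UNIV Q"
    using splits_exists by blast
  then obtain Qc where Qc: "\<And>j. splits (0, j) UNIV (Qc j)"
    by metis
  define Q where "Q = (\<Union>j. Qc j)"
  have partition: "mcone_partition Q (\<Union>j. mcone (0, j) UNIV - I)"
    unfolding Q_def
    by (rule mcone_partition_UN) (use Qc in \<open>auto simp: splits_def disjoint_family_on_def mcone_UNIV\<close>)
  moreover have "(\<Union>j. mcone (0, j) UNIV - I) = - I"
    by (auto simp: mcone_UNIV)
  moreover have "mcone_standard d q Q"
    unfolding Q_def
    using Qc deg_gens by (intro mcone_standard_UN) (simp add: splits_def term_deg_zero max_absorb1)
  moreover have "\<forall>w. minimal_in I w \<longrightarrow> term_deg d w \<le> max (1 + Max ((\<lambda>C. term_deg d (fst C)) ` Q)) q"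
  proof (intro allI impI)
    fix w assume w: "minimal_in I w"
    show "term_deg d w \<le> max (1 + Max ((\<lambda>C. term_deg d (fst C)) ` Q)) q"
    proof (cases "w = (0, snd w)")
      case True
      then have "term_deg d w = d (snd w)"
        by (metis term_deg_zero)
      then show ?thesis
        using deg_gens[of "snd w"] by simp
    next
      case False
      have "w \<in> mcone (0, snd w) UNIV"
        by (simp add: mcone_UNIV)
      then have "\<exists>C\<in>Qc (snd w). term_deg d w \<le> term_deg d (fst C) + 1"
        using Qc[of "snd w"] w False unfolding splits_def by blast
      then obtain C where "C \<in> Q" "term_deg d w \<le> term_deg d (fst C) + 1"
        unfolding Q_def by blast
      moreover have "term_deg d (fst C) \<le> Max ((\<lambda>C. term_deg d (fst C)) ` Q)"
        using partition \<open>C \<in> Q\<close> by (intro Max_ge) (auto simp: mcone_partition_def)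
      ultimately show ?thesis
        by linarith
    qed
  qed
  ultimately show ?thesis
    using that by simp
qed

section \<open>Groebner bases\<close>

lemma lt_mem_init_terms: "f \<in> M \<Longrightarrow> f \<noteq> 0 \<Longrightarrow> lt ord f \<in> init_terms ord M"
  unfolding init_terms_def by auto

lemma groebner_basis_divides_init_term:
  assumes "groebner_basis ord M G" "w \<in> init_terms ord M"
  obtains g where "g \<in> G" "g \<noteq> 0" "tdvd (lt ord g) w"
proof -
  obtain f where "f \<in> M" "f \<noteq> 0" "tdvd (lt ord f) w"
    using assms(2) by (auto simp: init_terms_def)
  moreover obtain g where "g \<in> G" "g \<noteq> 0" "tdvd (lt ord g) (lt ord f)"
    using assms(1) calculation by (auto simp: groebner_basis_def)
  ultimately show ?thesis
    using that tdvd_trans by metis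
qed

lemma init_terms_eq_upward_closure:
  assumes "groebner_basis ord M G"
  shows "init_terms ord M = {w. \<exists>u\<in>lt ord ` {g\<in>G. g \<noteq> 0}. tdvd u w}"
proof (intro set_eqI iffI)
  fix w assume "w \<in> init_terms ord M"
  then show "w \<in> {w. \<exists>u\<in>lt ord ` {g\<in>G. g \<noteq> 0}. tdvd u w}"
    using groebner_basis_divides_init_term[OF assms] by blast
next
  fix w assume "w \<in> {w. \<exists>u\<in>lt ord ` {g\<in>G. g \<noteq> 0}. tdvd u w}"
  then show "w \<in> init_terms ord M"
    using assms unfolding groebner_basis_def init_terms_def by blast
qed

lemma exists_minimal_divisor:
  fixes w0 :: "('v::finite, 'j) fterm"
  assumes "w0 \<in> I"
  obtains w where "minimal_in I w" "tdvd w w0"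
proof -
  obtain w where w: "w \<in> I" "tdvd w w0"
    and least: "\<And>v. v \<in> I \<Longrightarrow> tdvd v w0 \<Longrightarrow> term_deg (\<lambda>_. 0) w \<le> term_deg (\<lambda>_. 0) v"
    using ex_has_least_nat[of "\<lambda>w. w \<in> I \<and> tdvd w w0" w0 "term_deg (\<lambda>_. 0)"] assms by auto
  have "v = w" if "tdvd v w" "v \<in> I" for v
    using least[OF that(2) tdvd_trans[OF that(1) w(2)]] tdvd_term_deg_le[OF that(1)] that(1)
    by (metis le_antisym tdvd_term_deg_eq)
  then show ?thesis
    using that w unfolding minimal_in_def by blast
qed

lemma elem_deg_eq_term_deg:
  assumes "homog_of d k f" "u \<in> Poly_Mapping.keys f"
  shows "elem_deg d f = term_deg d u"
proof -
  have "term_deg d ` Poly_Mapping.keys f = {k}"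
    using assms unfolding homog_of_def by force
  then show ?thesis
    using assms unfolding homog_of_def elem_deg_def by simp
qed

lemma groebner_basis_degree_truncation:
  fixes M G :: "(('v::finite, 'j) fterm \<Rightarrow>\<^sub>0 'k::zero) set"
  assumes mo: "monomial_order ord" and gb: "groebner_basis ord M G" and hom: "\<forall>g\<in>G. homogeneous d g"
    and min_gens: "\<And>w. minimal_in (init_terms ord M) w \<Longrightarrow> term_deg d w \<le> B"
  shows "groebner_basis ord M {g\<in>G. elem_deg d g \<le> B}"
  unfolding groebner_basis_def
proof (intro conjI ballI impI)
  show "finite {g\<in>G. elem_deg d g \<le> B}" "{g\<in>G. elem_deg d g \<le> B} \<subseteq> M"
    using gb by (auto simp: groebner_basis_def)
  fix f assume "f \<in> M" "f \<noteq> 0"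
  then obtain w where w: "minimal_in (init_terms ord M) w" "tdvd w (lt ord f)"
    using exists_minimal_divisor lt_mem_init_terms by metis
  then obtain g where g: "g \<in> G" "g \<noteq> 0" "tdvd (lt ord g) w"
    using groebner_basis_divides_init_term[OF gb] unfolding minimal_in_def by metis
  have "lt ord g \<in> init_terms ord M"
    using gb g(1,2) by (intro lt_mem_init_terms) (auto simp: groebner_basis_def)
  then have "lt ord g = w"
    using w(1) g(3) unfolding minimal_in_def by blast
  moreover have "elem_deg d g = term_deg d (lt ord g)"
    using hom g(1) lt_in_keys[OF mo g(2)] elem_deg_eq_term_deg unfolding homogeneous_def by blast
  ultimately have "elem_deg d g \<le> B"
    using min_gens w(1) by simp
  then show "\<exists>g\<in>{g\<in>G. elem_deg d g \<le> B}. g \<noteq> 0 \<and> tdvd (lt ord g) (lt ord f)"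
    using g w(2) tdvd_trans by blast
qed

lemma reduced_groebner_basis_lt_minimal:
  assumes mo: "monomial_order ord" and red: "reduced_groebner_basis ord M Gr" and "g \<in> Gr"
  shows "minimal_in (init_terms ord M) (lt ord g)"
proof -
  have gb: "groebner_basis ord M Gr" and "g \<noteq> 0"
    and irreducible: "\<And>g' u. g' \<in> Gr \<Longrightarrow> g' \<noteq> g \<Longrightarrow> u \<in> Poly_Mapping.keys g \<Longrightarrow>
      \<not> tdvd (lt ord g') u"
    using red \<open>g \<in> Gr\<close> unfolding reduced_groebner_basis_def by blast+
  have "lt ord g \<in> init_terms ord M"
    using gb \<open>g \<in> Gr\<close> \<open>g \<noteq> 0\<close> by (intro lt_mem_init_terms) (auto simp: groebner_basis_def)
  moreover have "v = lt ord g" if v: "tdvd v (lt ord g)" "v \<in> init_terms ord M" for v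
  proof -
    obtain g' where "g' \<in> Gr" "tdvd (lt ord g') v"
      using groebner_basis_divides_init_term[OF gb v(2)] by metis
    then have "g' = g"
      using irreducible lt_in_keys[OF mo \<open>g \<noteq> 0\<close>] v(1) tdvd_trans by blast
    then show ?thesis
      using \<open>tdvd (lt ord g') v\<close> v(1) tdvd_antisym by blast
  qed
  ultimately show ?thesis
    unfolding minimal_in_def by blast
qed

lemma lookup_hcomp:
  "Poly_Mapping.lookup (hcomp d k f) u = (if term_deg d u = k then Poly_Mapping.lookup f u else 0)"
  unfolding hcomp_def lookup_sum lookup_single when_def by (auto simp: in_keys_iff)

text \<open>If g had a monomial of degree other than k = deg (lt g), then r = g minus its
  degree-k component would be a nonzero element of M.  Reducedness forces lt g to divide lt r,
  a monomial of g other than lt g; but a proper multiple of lt g is greater than lt g.\<close>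

lemma reduced_groebner_basis_homogeneous:
  fixes M :: "(('v::finite, 'j) fterm \<Rightarrow>\<^sub>0 'k::comm_ring_1) set"
  assumes graded: "graded_submodule d M" and mo: "monomial_order ord"
    and red: "reduced_groebner_basis ord M Gr" and "g \<in> Gr"
  shows "homog_of d (term_deg d (lt ord g)) g"
proof -
  define k where "k = term_deg d (lt ord g)"
  have gb: "groebner_basis ord M Gr" and "g \<noteq> 0"
    and irreducible: "\<And>g' u. g' \<in> Gr \<Longrightarrow> g' \<noteq> g \<Longrightarrow> u \<in> Poly_Mapping.keys g \<Longrightarrow>
      \<not> tdvd (lt ord g') u"
    using red \<open>g \<in> Gr\<close> unfolding reduced_groebner_basis_def by blast+
  have "g \<in> M"
    using gb \<open>g \<in> Gr\<close> by (auto simp: groebner_basis_def)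
  define r where "r = g - hcomp d k g"
  have "r \<in> M"
    using graded \<open>g \<in> M\<close> unfolding r_def graded_submodule_def by (blast intro: submodule_diff)
  have lookup_r: "Poly_Mapping.lookup r u = (if term_deg d u = k then 0 else Poly_Mapping.lookup g u)" for u
    by (simp add: r_def lookup_minus lookup_hcomp)
  have "r = 0"
  proof (rule ccontr)
    assume "r \<noteq> 0"
    have lt_r: "lt ord r \<in> Poly_Mapping.keys g" "term_deg d (lt ord r) \<noteq> k"
      using lt_in_keys[OF mo \<open>r \<noteq> 0\<close>] by (auto simp: in_keys_iff lookup_r split: if_splits)
    obtain g' where "g' \<in> Gr" "tdvd (lt ord g') (lt ord r)"
      using groebner_basis_divides_init_term[OF gb lt_mem_init_terms[OF \<open>r \<in> M\<close> \<open>r \<noteq> 0\<close>]] by metis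
    then have "g' = g"
      using irreducible lt_r(1) by blast
    then obtain t where t: "lt ord r = tshift t (lt ord g)"
      using \<open>tdvd (lt ord g') (lt ord r)\<close> by (auto simp: tdvd_def)
    then have "t \<noteq> 0" "lt ord r \<noteq> lt ord g"
      using lt_r(2) by (auto simp: k_def)
    then have "ord (lt ord g) (lt ord r)" "ord (lt ord r) (lt ord g)"
      using monomial_orderD(4)[OF mo] lt_max[OF mo \<open>g \<noteq> 0\<close> lt_r(1)] t by auto
    then show False
      using monomial_orderD(1,2)[OF mo] by blast
  qed
  then show ?thesis
    unfolding homog_of_def k_def[symmetric]
    by (metis in_keys_iff lookup_r lookup_zero)
qed

lemma exists_standard_cone_decomp:
  fixes M G :: "(('v::finite, 'j::finite) fterm \<Rightarrow>\<^sub>0 'k::comm_ring_1) set"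
  assumes gb: "groebner_basis ord M G" and deg_gens: "\<And>j. d j \<le> l"
  obtains Q where "cone_decomp d (normal_space ord M) Q" "q_standard d l Q"
    and "\<forall>w. minimal_in (init_terms ord M) w \<longrightarrow> term_deg d w \<le> max (1 + decomp_deg d Q) l"
proof -
  have "finite (lt ord ` {g\<in>G. g \<noteq> 0})"
    using gb by (simp add: groebner_basis_def)
  then obtain Q0 where partition: "mcone_partition Q0 (- init_terms ord M)"
    and standard: "mcone_standard d l Q0"
    and min_gens: "\<forall>w. minimal_in (init_terms ord M) w \<longrightarrow>
      term_deg d w \<le> max (1 + Max ((\<lambda>C. term_deg d (fst C)) ` Q0)) l"
    by (rule standard_partition_exists[where d = d and q = l,
          OF _ init_terms_eq_upward_closure[OF gb] deg_gens])
  define Q :: "((('v, 'j) fterm \<Rightarrow>\<^sub>0 'k) \<times> 'v set) set" where "Q = monomial_cone ` Q0"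
  have "normal_space ord M = {f. Poly_Mapping.keys f \<subseteq> - init_terms ord M}"
    by (auto simp: normal_space_def)
  then have "cone_decomp d (normal_space ord M) Q"
    unfolding Q_def using cone_decomp_monomial_cones[OF partition] by simp
  moreover have "q_standard d l Q"
    unfolding Q_def by (rule q_standard_monomial_cones[OF standard])
  moreover have "decomp_deg d Q = Max ((\<lambda>C. term_deg d (fst C)) ` Q0)"
    unfolding Q_def by (rule decomp_deg_monomial_cones)
  with min_gens have "\<forall>w. minimal_in (init_terms ord M) w \<longrightarrow> term_deg d w \<le> max (1 + decomp_deg d Q) l"
    by (simp only:)
  ultimately show ?thesis
    by (rule that)
qed

lemma reduced_groebner_basis_elem_deg_le:
  fixes M :: "(('v::finite, 'j) fterm \<Rightarrow>\<^sub>0 'k::comm_ring_1) set"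
  assumes graded: "graded_submodule d M" and mo: "monomial_order ord"
    and red: "reduced_groebner_basis ord M Gr" and "g \<in> Gr"
    and min_gens: "\<forall>w. minimal_in (init_terms ord M) w \<longrightarrow> term_deg d w \<le> B"
  shows "elem_deg d g \<le> B"
proof -
  have "g \<noteq> 0"
    using red \<open>g \<in> Gr\<close> unfolding reduced_groebner_basis_def by blast
  then have "elem_deg d g = term_deg d (lt ord g)"
    using elem_deg_eq_term_deg reduced_groebner_basis_homogeneous[OF graded mo red \<open>g \<in> Gr\<close>]
      lt_in_keys[OF mo] by blast
  then show ?thesis
    using min_gens[rule_format] reduced_groebner_basis_lt_minimal[OF mo red \<open>g \<in> Gr\<close>] by simp
qed

theorem theorem4p7:
  fixes d :: "'j::finite \<Rightarrow> nat"
    and ord :: "('v::finite, 'j) fterm \<Rightarrow> ('v, 'j) fterm \<Rightarrow> bool"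
    and M G :: "(('v, 'j) fterm \<Rightarrow>\<^sub>0 'k::field) set"
  assumes "graded_submodule d M"
    and "M \<noteq> UNIV"
    and "monomial_order ord"
    and "groebner_basis ord M G"
    and "\<forall>g\<in>G. homogeneous d g"
  shows "\<exists>Q. cone_decomp d (normal_space ord M) Q \<and> q_standard d (Max (range d)) Q \<and>
     groebner_basis ord M {g\<in>G. elem_deg d g \<le> max (1 + decomp_deg d Q) (Max (range d))} \<and>
     (\<forall>Gr. reduced_groebner_basis ord M Gr \<longrightarrow>
        (\<forall>g\<in>Gr. elem_deg d g \<le> max (1 + decomp_deg d Q) (Max (range d))))"
proof -
  define l where "l = Max (range d)"
  have deg_gens: "d j \<le> l" for j
    unfolding l_def by (rule Max_ge) auto
  obtain Q where decomp: "cone_decomp d (normal_space ord M) Q" and standard: "q_standard d l Q"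
    and min_gens: "\<forall>w. minimal_in (init_terms ord M) w \<longrightarrow> term_deg d w \<le> max (1 + decomp_deg d Q) l"
    by (rule exists_standard_cone_decomp[where d = d and l = l, OF assms(4) deg_gens])
  have "groebner_basis ord M {g\<in>G. elem_deg d g \<le> max (1 + decomp_deg d Q) l}"
    using groebner_basis_degree_truncation[OF assms(3,4,5)] min_gens by blast
  moreover have "\<forall>Gr. reduced_groebner_basis ord M Gr \<longrightarrow>
      (\<forall>g\<in>Gr. elem_deg d g \<le> max (1 + decomp_deg d Q) l)"
    using reduced_groebner_basis_elem_deg_le[OF assms(1,3)] min_gens by blast
  ultimately show ?thesis
    using decomp standard unfolding l_def by blast
qed

end
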